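(* If $\mathcal{I}$ is a boring ideal, then every Hausdorff space in $\mathrm{FinBW}(\mathcal{I})$ is a boring space.
   Context: An ideal on an infinite countable set $X$ is a family $\mathcal{I}\subseteq\mathcal{P}(X)$ closed under subsets and finite unions, containing all finite subsets, with $X\notin\mathcal{I}$. A space $X$ is in $\mathrm{FinBW}(\mathcal{I})$ if $X$ is Hausdorff and for every sequence $(x_n)_{n\in\bigcup\mathcal{I}}$ in $X$ there is $A\notin\mathcal{I}$ with $(x_n)_{n\in A}$ convergent in $X$. $\mathrm{Fin}^2$: ideal on $\omega^2$ of all $A$ with only finitely many $n$ such that $\{m:(n,m)\in A\}$ is infinite. $\mathcal{BI}$: ideal on $\omega^3$ of all $A$ for which there is $k$ with $\{(j,l):(i,j,l)\in A\}\in\mathrm{Fin}^2$ for $i<k$ and finite for $i\ge k$. $\mathcal{I}\sqsubseteq\mathcal{J}$: there is a bijection $f:\bigcup\mathcal{J}\to\bigcup\mathcal{I}$ with $f^{-1}[A]\in\mathcal{J}$ for all $A\in\mathcal{I}$. $\mathcal{I}$ is boring if $\mathcal{BI}\sqsubseteq\mathcal{I}$. A topological space is boring if it is sequentially compact and there is a finite $F\subseteq X$ such that every convergent sequence in $X$ with infinitely many distinct values converges to some point of $F$. *)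

theory Defs
  imports "HOL-Analysis.Analysis"
begin

definition is_ideal :: "'a set set \<Rightarrow> bool" where
  "is_ideal I \<longleftrightarrow>
     infinite (\<Union>I) \<and> countable (\<Union>I) \<and>
     (\<forall>A\<in>I. \<forall>B. B \<subseteq> A \<longrightarrow> B \<in> I) \<and>
     (\<forall>A\<in>I. \<forall>B\<in>I. A \<union> B \<in> I) \<and>
     (\<forall>F. F \<subseteq> \<Union>I \<and> finite F \<longrightarrow> F \<in> I) \<and>
     \<Union>I \<notin> I"

definition conv_on :: "'b topology \<Rightarrow> ('a \<Rightarrow> 'b) \<Rightarrow> 'a set \<Rightarrow> bool" where
  "conv_on X x A \<longleftrightarrow>
     (\<exists>l\<in>topspace X. \<forall>U. openin X U \<and> l \<in> U \<longrightarrow> finite {n\<in>A. x n \<notin> U})"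

definition FinBW :: "'a set set \<Rightarrow> 'b topology \<Rightarrow> bool" where
  "FinBW I X \<longleftrightarrow> Hausdorff_space X \<and>
     (\<forall>x. (\<forall>n\<in>\<Union>I. x n \<in> topspace X) \<longrightarrow>
        (\<exists>A. A \<subseteq> \<Union>I \<and> A \<notin> I \<and> conv_on X x A))"

definition Fin2 :: "(nat \<times> nat) set set" where
  "Fin2 = {A. finite {n. infinite {m. (n, m) \<in> A}}}"

definition BI :: "(nat \<times> nat \<times> nat) set set" where
  "BI = {A. \<exists>k. (\<forall>i<k. {(j, l). (i, j, l) \<in> A} \<in> Fin2) \<and>
                (\<forall>i\<ge>k. finite {(j, l). (i, j, l) \<in> A})}"

text \<open>\<open>ideal_below I J\<close> is \<open>I \<sqsubseteq> J\<close>: a bijection f from \<open>\<Union>J\<close> onto \<open>\<Union>I\<close>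
  with \<open>f\<^sup>-\<^sup>1[A] \<in> J\<close> for all \<open>A \<in> I\<close>.\<close>
definition ideal_below :: "'a set set \<Rightarrow> 'c set set \<Rightarrow> bool" where
  "ideal_below I J \<longleftrightarrow>
     (\<exists>f. bij_betw f (\<Union>J) (\<Union>I) \<and> (\<forall>A\<in>I. {n\<in>\<Union>J. f n \<in> A} \<in> J))"

definition boring_ideal :: "'a set set \<Rightarrow> bool" where
  "boring_ideal I \<longleftrightarrow> ideal_below BI I"

definition seq_compact_space :: "'b topology \<Rightarrow> bool" where
  "seq_compact_space X \<longleftrightarrow>
     (\<forall>x::nat \<Rightarrow> 'b. (\<forall>n. x n \<in> topspace X) \<longrightarrow>
        (\<exists>r l. strict_mono r \<and> limitin X (x \<circ> r) l sequentially))"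

definition boring_space :: "'b topology \<Rightarrow> bool" where
  "boring_space X \<longleftrightarrow> seq_compact_space X \<and>
     (\<exists>F. finite F \<and> F \<subseteq> topspace X \<and>
        (\<forall>x::nat \<Rightarrow> 'b. (\<forall>n. x n \<in> topspace X) \<and> (\<exists>l. limitin X x l sequentially)
            \<and> infinite (range x) \<longrightarrow> (\<exists>l\<in>F. limitin X x l sequentially)))"

end

theory Submission
  imports Defs
begin

text \<open>
  \<open>FinBW(I) \<subseteq> FinBW(J)\<close> whenever \<open>J \<sqsubseteq> I\<close>, so \<open>X\<close> is in \<open>FinBW(BI)\<close>; sequential compactness
  only uses that sets outside an ideal are infinite. For the finite set of special points take all
  limits of sequences with infinitely many values. If there were infinitely many, choose
  distinct ones \<open>p i\<close> and injective sequences \<open>u i \<longlonglongrightarrow> p i\<close> with pairwise disjoint ranges,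
  and apply \<open>FinBW(BI)\<close> to \<open>(i, j, l) \<mapsto> u i j\<close>: it converges to some \<open>q\<close> along a set
  \<open>B \<notin> BI\<close>. An infinite column \<open>(i, j)\<close> of \<open>B\<close> forces \<open>q = u i j\<close>, so every row of \<open>B\<close>
  has at most one infinite column and lies in \<open>Fin2\<close>; an infinite row all of whose columns
  are finite forces \<open>q = p i\<close>. Hence \<open>B\<close> has infinitely many infinite rows, each giving
  \<open>q = p i\<close> or \<open>q \<in> range (u i)\<close>, and each alternative holds for at most one \<open>i\<close>.
\<close>

lemma eventually_cofinite_inf_principal:
  "eventually P (inf cofinite (principal A)) \<longleftrightarrow> finite {n\<in>A. \<not> P n}"
  by (simp add: eventually_inf_principal eventually_cofinite conj_commute)

lemma cofinite_inf_principal_eq_bot_iff: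
  "inf cofinite (principal A) = bot \<longleftrightarrow> finite A"
  using eventually_cofinite_inf_principal[of "\<lambda>_. False" A] by (simp add: eventually_False)

lemma conv_on_iff_limitin:
  "conv_on X x A \<longleftrightarrow> (\<exists>l. limitin X x l (inf cofinite (principal A)))"
  unfolding conv_on_def limitin_def eventually_cofinite_inf_principal by blast

lemma limitin_mono:
  assumes "F \<le> G" and "limitin X f l G"
  shows "limitin X f l F"
  using assms(2) filter_leD[OF assms(1)] unfolding limitin_def by blast

lemma limitin_compose_filterlim:
  assumes "filterlim g G F" and "limitin X f l G"
  shows "limitin X (f \<circ> g) l F"
proof -
  have "eventually (\<lambda>x. f (g x) \<in> U) F" if "openin X U" "l \<in> U" for U
    using limitinD[OF assms(2) that] by (rule filterlim_iff[THEN iffD1, OF assms(1), rule_format])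
  then show ?thesis
    using assms(2) unfolding limitin_def by simp
qed

lemma limitin_cofinite_inf_principal_unique:
  assumes "Hausdorff_space X" and "C \<subseteq> B" and "infinite C"
    and "limitin X y q (inf cofinite (principal B))"
    and "limitin X y q' (inf cofinite (principal C))"
  shows "q = q'"
proof (rule limitin_Hausdorff_unique[OF _ assms(5) _ assms(1)])
  show "limitin X y q (inf cofinite (principal C))"
    using assms(2) by (intro limitin_mono[OF _ assms(4)] inf_mono) auto
  show "\<not> trivial_limit (inf cofinite (principal C))"
    using assms(3) cofinite_inf_principal_eq_bot_iff by blast
qed

lemma filterlim_sequentially_cofinite_principal:
  fixes g :: "'a \<Rightarrow> nat"
  assumes "\<And>j. finite {n\<in>C. g n = j}"
  shows "filterlim g sequentially (inf cofinite (principal C))"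
  unfolding filterlim_at_top eventually_cofinite_inf_principal
proof
  fix Z
  have "{n\<in>C. \<not> Z \<le> g n} = (\<Union>j<Z. {n\<in>C. g n = j})"
    by auto
  then show "finite {n\<in>C. \<not> Z \<le> g n}"
    using assms by simp
qed

lemma filterlim_enumerate_cofinite_principal:
  fixes S :: "nat set"
  assumes "infinite S"
  shows "filterlim (enumerate S) (inf cofinite (principal S)) sequentially"
  unfolding filterlim_iff eventually_cofinite_inf_principal
proof (intro allI impI)
  fix P assume "finite {n\<in>S. \<not> P n}"
  then have "finite (enumerate S -` {n\<in>S. \<not> P n})"
    using inj_enumerate[OF assms] by (rule finite_vimageI)
  moreover have "enumerate S -` {n\<in>S. \<not> P n} = {m. \<not> P (enumerate S m)}"
    using enumerate_in_set[OF assms] by auto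
  ultimately show "eventually (\<lambda>m. P (enumerate S m)) sequentially"
    by (simp add: cofinite_eq_sequentially[symmetric] eventually_cofinite)
qed

lemma conv_on_image:
  assumes "conv_on X (x \<circ> g) A"
  shows "conv_on X x (g ` A)"
proof -
  obtain l where "l \<in> topspace X"
    and l: "\<And>U. openin X U \<Longrightarrow> l \<in> U \<Longrightarrow> finite {n\<in>A. x (g n) \<notin> U}"
    using assms unfolding conv_on_def by auto
  have "finite {m\<in>g ` A. x m \<notin> U}" if "openin X U" "l \<in> U" for U
  proof -
    have "{m\<in>g ` A. x m \<notin> U} = g ` {n\<in>A. x (g n) \<notin> U}"
      by auto
    then show ?thesis
      using l[OF that] by simp
  qed
  with \<open>l \<in> topspace X\<close> show ?thesis
    unfolding conv_on_def by blast
qed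

lemma conv_on_imp_convergent_subsequence:
  fixes S :: "nat set"
  assumes "infinite S" and "conv_on X x S"
  shows "\<exists>r l. strict_mono r \<and> limitin X (x \<circ> r) l sequentially"
proof -
  obtain l where "limitin X x l (inf cofinite (principal S))"
    using assms(2) unfolding conv_on_iff_limitin by blast
  with filterlim_enumerate_cofinite_principal[OF assms(1)]
  have "limitin X (x \<circ> enumerate S) l sequentially"
    by (rule limitin_compose_filterlim)
  moreover have "strict_mono (enumerate S)"
    using assms(1) by (simp add: strict_mono_def)
  ultimately show ?thesis by blast
qed

lemma infinite_if_notin_ideal:
  assumes "is_ideal I" and "A \<subseteq> \<Union>I" and "A \<notin> I"
  shows "infinite A"
  using assms unfolding is_ideal_def by blast

lemma FinBW_ideal_below:
  assumes "ideal_below J I" and "FinBW I X"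
  shows "FinBW J X"
proof -
  obtain f where f: "bij_betw f (\<Union>I) (\<Union>J)" and pre: "\<And>B. B \<in> J \<Longrightarrow> {n\<in>\<Union>I. f n \<in> B} \<in> I"
    using assms(1) unfolding ideal_below_def by blast
  have "\<exists>B. B \<subseteq> \<Union>J \<and> B \<notin> J \<and> conv_on X x B" if x: "\<forall>n\<in>\<Union>J. x n \<in> topspace X" for x
  proof -
    have "\<forall>n\<in>\<Union>I. (x \<circ> f) n \<in> topspace X"
      using x bij_betwE[OF f] by (simp only: comp_apply) blast
    then obtain A where A: "A \<subseteq> \<Union>I" "A \<notin> I" "conv_on X (x \<circ> f) A"
      using assms(2) unfolding FinBW_def by blast
    have "{n\<in>\<Union>I. f n \<in> f ` A} = A"
      using A(1) inj_on_image_mem_iff[OF bij_betw_imp_inj_on[OF f] _ A(1)] by blast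
    then have "f ` A \<notin> J"
      using pre A(2) by metis
    moreover have "f ` A \<subseteq> \<Union>J"
      using A(1) bij_betwE[OF f] by blast
    ultimately show ?thesis
      using conv_on_image[OF A(3)] by blast
  qed
  then show ?thesis
    using assms(2) unfolding FinBW_def by blast
qed

lemma seq_compact_space_if_FinBW:
  assumes "is_ideal I" and "FinBW I X"
  shows "seq_compact_space X"
  unfolding seq_compact_space_def
proof (intro allI impI)
  fix x :: "nat \<Rightarrow> _" assume x: "\<forall>n. x n \<in> topspace X"
  define g where "g = to_nat_on (\<Union>I)"
  have g: "inj_on g (\<Union>I)"
    using assms(1) unfolding g_def is_ideal_def by (blast intro: inj_on_to_nat_on)
  have "\<forall>n\<in>\<Union>I. (x \<circ> g) n \<in> topspace X"
    using x by simp
  then obtain A where A: "A \<subseteq> \<Union>I" "A \<notin> I" "conv_on X (x \<circ> g) A"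
    using assms(2) unfolding FinBW_def by blast
  have "infinite (g ` A)"
    using infinite_if_notin_ideal[OF assms(1) A(1,2)] inj_on_subset[OF g A(1)] finite_image_iff
    by blast
  then show "\<exists>r l. strict_mono r \<and> limitin X (x \<circ> r) l sequentially"
    using conv_on_image[OF A(3)] by (rule conv_on_imp_convergent_subsequence)
qed

lemma finite_in_Fin2:
  assumes "finite A"
  shows "A \<in> Fin2"
proof -
  have "finite {m. (n, m) \<in> A}" for n
    using assms by (rule finite_subset[rotated, OF finite_imageI]) force
  then show ?thesis
    unfolding Fin2_def by simp
qed

lemma BI_iff:
  "A \<in> BI \<longleftrightarrow>
     (\<forall>i. {(j, l). (i, j, l) \<in> A} \<in> Fin2) \<and> finite {i. infinite {(j, l). (i, j, l) \<in> A}}"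
proof
  assume "A \<in> BI"
  then obtain k where low: "\<And>i. i < k \<Longrightarrow> {(j, l). (i, j, l) \<in> A} \<in> Fin2"
    and high: "\<And>i. k \<le> i \<Longrightarrow> finite {(j, l). (i, j, l) \<in> A}"
    unfolding BI_def by auto
  have "{(j, l). (i, j, l) \<in> A} \<in> Fin2" for i
    using low high finite_in_Fin2 by (cases "i < k") auto
  moreover have "{i. infinite {(j, l). (i, j, l) \<in> A}} \<subseteq> {..<k}"
    using high by (auto simp flip: not_less)
  ultimately show "(\<forall>i. {(j, l). (i, j, l) \<in> A} \<in> Fin2) \<and> finite {i. infinite {(j, l). (i, j, l) \<in> A}}"
    using finite_subset by blast
next
  assume "(\<forall>i. {(j, l). (i, j, l) \<in> A} \<in> Fin2) \<and> finite {i. infinite {(j, l). (i, j, l) \<in> A}}"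
  moreover from this obtain k where "{i. infinite {(j, l). (i, j, l) \<in> A}} \<subseteq> {..<k}"
    using finite_nat_iff_bounded by blast
  ultimately show "A \<in> BI"
    unfolding BI_def by (intro CollectI exI[of _ k]) auto
qed

lemma finite_in_BI:
  assumes "finite A"
  shows "A \<in> BI"
proof -
  have "finite {(j, l). (i, j, l) \<in> A}" for i
    using assms by (rule finite_subset[rotated, OF finite_imageI]) force
  then show ?thesis
    unfolding BI_iff by (simp add: finite_in_Fin2)
qed

lemma Union_BI: "\<Union>BI = UNIV"
  using finite_in_BI[of "{_}"] by blast

definition nontrivial_limits :: "'b topology \<Rightarrow> 'b set" where
  "nontrivial_limits X =
     {l. \<exists>x::nat \<Rightarrow> 'b. (\<forall>n. x n \<in> topspace X) \<and> limitin X x l sequentially \<and> infinite (range x)}"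

lemma boring_spaceI:
  assumes "seq_compact_space X" and "finite (nontrivial_limits X)"
  shows "boring_space X"
proof -
  have "nontrivial_limits X \<subseteq> topspace X"
    unfolding nontrivial_limits_def by (auto dest: limitin_topspace)
  moreover have "\<exists>l\<in>nontrivial_limits X. limitin X x l sequentially"
    if "(\<forall>n. x n \<in> topspace X) \<and> (\<exists>l. limitin X x l sequentially) \<and> infinite (range x)"
    for x :: "nat \<Rightarrow> _"
    using that unfolding nontrivial_limits_def by blast
  ultimately show ?thesis
    unfolding boring_space_def using assms by blast
qed

lemma infinite_range_imp_inj_subseq:
  fixes x :: "nat \<Rightarrow> 'a"
  assumes "infinite (range x)"
  obtains r :: "nat \<Rightarrow> nat" where "strict_mono r" and "inj (x \<circ> r)"
proof -
  define T where "T = {n. \<forall>m<n. x m \<noteq> x n}"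
  have "x n \<in> x ` T" for n
  proof -
    define k where "k = (LEAST k. x k = x n)"
    have "x k = x n"
      unfolding k_def by (rule LeastI[of _ n]) (rule refl)
    moreover have "k \<in> T"
    proof -
      have "x m \<noteq> x k" if "m < k" for m
        using not_less_Least[of m "\<lambda>k. x k = x n"] that \<open>x k = x n\<close> unfolding k_def by simp
      then show ?thesis
        unfolding T_def by blast
    qed
    ultimately show ?thesis
      by (metis image_eqI)
  qed
  then have "range x \<subseteq> x ` T"
    by blast
  then have "infinite T"
    using assms finite_surj by blast
  have inj: "inj_on x T"
  proof (rule inj_onI)
    fix a b assume "a \<in> T" "b \<in> T" "x a = x b"
    then show "a = b"
      unfolding T_def by (cases a b rule: linorder_cases) auto
  qed
  have "strict_mono (enumerate T)"
    using \<open>infinite T\<close> by (simp add: strict_mono_def)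
  moreover have "inj (x \<circ> enumerate T)"
  proof (rule comp_inj_on)
    show "inj (enumerate T)"
      using \<open>infinite T\<close> by (rule inj_enumerate)
    show "inj_on x (range (enumerate T))"
      using inj enumerate_in_set[OF \<open>infinite T\<close>] by (blast intro: inj_on_subset)
  qed
  ultimately show ?thesis
    by (rule that)
qed

lemma nontrivial_limit_imp_inj_seq:
  assumes "l \<in> nontrivial_limits X"
  shows "\<exists>s. (\<forall>j. s j \<in> topspace X) \<and> inj s \<and> limitin X s l sequentially"
proof -
  obtain x :: "nat \<Rightarrow> _"
    where x: "\<forall>n. x n \<in> topspace X" "limitin X x l sequentially" "infinite (range x)"
    using assms unfolding nontrivial_limits_def by blast
  obtain r :: "nat \<Rightarrow> nat" where "strict_mono r" and "inj (x \<circ> r)"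
    using infinite_range_imp_inj_subseq[OF x(3)] .
  moreover from \<open>strict_mono r\<close> x(2) have "limitin X (x \<circ> r) l sequentially"
    by (rule limitin_subsequence)
  ultimately show ?thesis
    using x(1) by (intro exI[of _ "x \<circ> r"]) simp
qed

lemma limitin_sequentially_finite_outside:
  assumes "limitin X s a sequentially" and "openin X U" and "a \<in> U"
  shows "finite {j. s j \<notin> U}"
  using limitinD[OF assms] by (simp add: cofinite_eq_sequentially[symmetric] eventually_cofinite)

lemma Hausdorff_finite_common_values:
  assumes "Hausdorff_space X" and "limitin X s a sequentially" and "limitin X t b sequentially"
    and "a \<noteq> b" and "inj s"
  shows "finite {j. s j \<in> range t}"
proof -
  obtain U V where UV: "openin X U" "openin X V" "a \<in> U" "b \<in> V" "disjnt U V"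
    using assms(1-4) limitin_topspace unfolding Hausdorff_space_def by metis
  have "finite {j. s j \<notin> U}"
    using assms(2) UV(1,3) by (rule limitin_sequentially_finite_outside)
  moreover have "finite (s -` t ` {m. t m \<notin> V})"
    using limitin_sequentially_finite_outside[OF assms(3) UV(2,4)] assms(5)
    by (intro finite_vimageI finite_imageI)
  moreover have "{j. s j \<in> range t} \<subseteq> {j. s j \<notin> U} \<union> s -` t ` {m. t m \<notin> V}"
    using UV(5) by (auto simp: disjnt_iff)
  ultimately show ?thesis
    by (meson finite_UnI finite_subset)
qed

lemma disjoint_family_tails:
  fixes x :: "nat \<Rightarrow> nat \<Rightarrow> 'a"
  assumes "\<And>k n. k < n \<Longrightarrow> finite {j. x n j \<in> range (x k)}"
  obtains N where "disjoint_family (\<lambda>n. range (\<lambda>j. x n (j + N n)))"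
proof -
  have "\<exists>M. \<forall>k<n. \<forall>j. x n j \<in> range (x k) \<longrightarrow> j < M" for n
  proof -
    have "finite (\<Union>k<n. {j. x n j \<in> range (x k)})"
      using assms by simp
    then obtain M where "(\<Union>k<n. {j. x n j \<in> range (x k)}) \<subseteq> {..<M}"
      unfolding finite_nat_iff_bounded by blast
    then show ?thesis
      by blast
  qed
  then obtain N where N: "\<And>n k j. k < n \<Longrightarrow> x n j \<in> range (x k) \<Longrightarrow> j < N n"
    by metis
  have disj: "range (\<lambda>j. x n (j + N n)) \<inter> range (\<lambda>j. x k (j + N k)) = {}" if "k < n" for k n
  proof -
    have "x n (j + N n) \<notin> range (x k)" for j
      using N[OF that, of "j + N n"] by auto
    then show ?thesis
      by blast
  qed
  show ?thesis
  proof (rule that, unfold disjoint_family_on_def, intro ballI impI)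
    fix m n :: nat assume "m \<noteq> n"
    then show "range (\<lambda>j. x m (j + N m)) \<inter> range (\<lambda>j. x n (j + N n)) = {}"
      using disj[of m n] disj[of n m] by (cases m n rule: linorder_cases) (simp_all add: Int_commute)
  qed
qed

lemma finite_mem_disjoint_family:
  assumes "disjoint_family A"
  shows "finite {i. x \<in> A i}"
proof (cases "\<exists>i. x \<in> A i")
  case True
  then obtain i where "x \<in> A i"
    by blast
  then have "{i. x \<in> A i} \<subseteq> {i}"
    using assms unfolding disjoint_family_on_def by blast
  then show ?thesis
    by (rule finite_subset) simp
qed simp

lemma limitin_eq_on_infinite_column:
  assumes "Hausdorff_space X" and q: "limitin X y q (inf cofinite (principal B))"
    and "infinite {l. (i, j, l) \<in> B}" and "\<And>l. y (i, j, l) = c" and "c \<in> topspace X"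
  shows "q = c"
proof -
  define C where "C = {n\<in>B. fst n = i \<and> fst (snd n) = j}"
  have "C = (\<lambda>l. (i, j, l)) ` {l. (i, j, l) \<in> B}"
    unfolding C_def by force
  then have "infinite C"
    using assms(3) by (simp add: finite_image_iff inj_on_def)
  moreover have "y n = c" if "n \<in> C" for n
    using that assms(4) by (cases n) (simp add: C_def)
  then have "eventually (\<lambda>n. y n = c) (inf cofinite (principal C))"
    unfolding eventually_inf_principal by (blast intro: always_eventually)
  then have "limitin X y c (inf cofinite (principal C))"
    by (rule limitin_eventually[OF assms(5)])
  ultimately show ?thesis
    by (intro limitin_cofinite_inf_principal_unique[OF assms(1) _ _ q]) (auto simp: C_def)
qed

lemma limitin_eq_on_infinite_row:
  assumes "Hausdorff_space X" and q: "limitin X y q (inf cofinite (principal B))"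
    and "infinite {(j, l). (i, j, l) \<in> B}" and "\<And>j. finite {l. (i, j, l) \<in> B}"
    and "\<And>j l. y (i, j, l) = s j" and "limitin X s a sequentially"
  shows "q = a"
proof -
  define R where "R = {n\<in>B. fst n = i}"
  have "R = (\<lambda>(j, l). (i, j, l)) ` {(j, l). (i, j, l) \<in> B}"
    unfolding R_def by force
  then have "infinite R"
    using assms(3) by (simp add: finite_image_iff inj_on_def)
  have "{n\<in>R. fst (snd n) = j} = (\<lambda>l. (i, j, l)) ` {l. (i, j, l) \<in> B}" for j
    unfolding R_def by force
  then have "filterlim (fst \<circ> snd) sequentially (inf cofinite (principal R))"
    using assms(4) by (intro filterlim_sequentially_cofinite_principal) simp
  then have "limitin X (s \<circ> (fst \<circ> snd)) a (inf cofinite (principal R))"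
    using assms(6) by (rule limitin_compose_filterlim)
  moreover have "(s \<circ> (fst \<circ> snd)) n = y n" if "n \<in> R" for n
    using that assms(5) by (cases n) (simp add: R_def)
  then have "eventually (\<lambda>n. (s \<circ> (fst \<circ> snd)) n = y n) (inf cofinite (principal R))"
    unfolding eventually_inf_principal by (blast intro: always_eventually)
  ultimately have "limitin X y a (inf cofinite (principal R))"
    by (blast intro: limitin_transform_eventually)
  then show ?thesis
    by (intro limitin_cofinite_inf_principal_unique[OF assms(1) _ \<open>infinite R\<close> q]) (auto simp: R_def)
qed

lemma FinBW_BI_no_disjoint_convergent_family:
  fixes u :: "nat \<Rightarrow> nat \<Rightarrow> 'b" and p :: "nat \<Rightarrow> 'b"
  assumes "FinBW BI X" and "inj p"
    and u_top: "\<And>i j. u i j \<in> topspace X" and u_inj: "\<And>i. inj (u i)"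
    and u_lim: "\<And>i. limitin X (u i) (p i) sequentially"
    and "disjoint_family (\<lambda>i. range (u i))"
  shows False
proof -
  have H: "Hausdorff_space X"
    using assms(1) unfolding FinBW_def by blast
  define y where "y = (\<lambda>(i, j, l::nat). u i j)"
  have "\<forall>n\<in>\<Union>BI. y n \<in> topspace X"
    using u_top by (simp add: y_def split_beta)
  then obtain B where "B \<notin> BI" and "conv_on X y B"
    using assms(1) unfolding FinBW_def by blast
  then obtain q where q: "limitin X y q (inf cofinite (principal B))"
    unfolding conv_on_iff_limitin by blast
  have column: "q = u i j" if "infinite {l. (i, j, l) \<in> B}" for i j
    using limitin_eq_on_infinite_column[OF H q that] u_top by (simp add: y_def)
  have row: "q = p i"
    if "infinite {(j, l). (i, j, l) \<in> B}" and "\<And>j. finite {l. (i, j, l) \<in> B}" for i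
    using limitin_eq_on_infinite_row[OF H q that _ u_lim] by (simp add: y_def)
  have "{(j, l). (i, j, l) \<in> B} \<in> Fin2" for i
  proof -
    have "{j. infinite {l. (i, j, l) \<in> B}} \<subseteq> u i -` {q}"
      using column by auto
    then show ?thesis
      unfolding Fin2_def using finite_vimageI[OF _ u_inj] by (simp add: finite_subset)
  qed
  then have "infinite {i. infinite {(j, l). (i, j, l) \<in> B}}"
    using \<open>B \<notin> BI\<close> unfolding BI_iff by blast
  moreover have "{i. infinite {(j, l). (i, j, l) \<in> B}} \<subseteq> p -` {q} \<union> {i. q \<in> range (u i)}"
    using column row by blast
  moreover have "finite (p -` {q})"
    using assms(2) by (simp add: finite_vimageI)
  moreover have "finite {i. q \<in> range (u i)}"
    using assms(6) by (rule finite_mem_disjoint_family)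
  ultimately show False
    by (meson finite_UnI finite_subset)
qed

lemma finite_nontrivial_limits_if_FinBW_BI:
  assumes "FinBW BI X"
  shows "finite (nontrivial_limits X)"
proof (rule ccontr)
  assume "infinite (nontrivial_limits X)"
  then obtain p :: "nat \<Rightarrow> _" where p: "inj p" "range p \<subseteq> nontrivial_limits X"
    using infinite_countable_subset by blast
  have "\<forall>n. \<exists>s. (\<forall>j. s j \<in> topspace X) \<and> inj s \<and> limitin X s (p n) sequentially"
    using p(2) by (blast intro: nontrivial_limit_imp_inj_seq)
  from choice[OF this] obtain x where x_top: "\<And>n j. x n j \<in> topspace X"
    and x_inj: "\<And>n. inj (x n)" and x_lim: "\<And>n. limitin X (x n) (p n) sequentially"
    by blast
  have "finite {j. x n j \<in> range (x k)}" if "k < n" for k n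
  proof (rule Hausdorff_finite_common_values)
    show "Hausdorff_space X"
      using assms unfolding FinBW_def by blast
    show "p n \<noteq> p k"
      using that p(1) by (auto dest: injD)
  qed (use x_lim x_inj in auto)
  then obtain N where N: "disjoint_family (\<lambda>n. range (\<lambda>j. x n (j + N n)))"
    by (rule disjoint_family_tails)
  show False
  proof (rule FinBW_BI_no_disjoint_convergent_family[OF assms p(1), where u = "\<lambda>n j. x n (j + N n)"])
    show "inj (\<lambda>j. x n (j + N n))" for n
    proof (rule injI)
      fix a b assume "x n (a + N n) = x n (b + N n)"
      then have "a + N n = b + N n"
        by (rule injD[OF x_inj])
      then show "a = b"
        by simp
    qed
    show "limitin X (\<lambda>j. x n (j + N n)) (p n) sequentially" for n
      using x_lim by (rule limitin_sequentially_offset)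
  qed (use x_top N in auto)
qed

theorem proposition6p3:
  fixes I :: "'a set set" and X :: "'b topology"
  assumes "is_ideal I" and "boring_ideal I"
    and "Hausdorff_space X" and "FinBW I X"
  shows "boring_space X"
proof (rule boring_spaceI)
  show "seq_compact_space X"
    using assms(1,4) by (rule seq_compact_space_if_FinBW)
  have "FinBW BI X"
    using assms(2,4) unfolding boring_ideal_def by (rule FinBW_ideal_below)
  then show "finite (nontrivial_limits X)"
    by (rule finite_nontrivial_limits_if_FinBW_BI)
qed

end
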